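(* If $K\colon\mathbb{E}(D)\to\mathbb{E}(D')$ is affine, then $\mathsf{D}K$ is linear, i.e. $\mathsf{D}K(\eta_1+\eta_2)=\mathsf{D}K(\eta_1)+\mathsf{D}K(\eta_2)$ and $\mathsf{D}K(\alpha\eta)=\alpha\,\mathsf{D}K(\eta)$ for all $\eta,\eta_1,\eta_2\in\mathbb{E}(D)$ and $\alpha\in[0,\infty)$.
   Context: $\mathbb{E}(D)$ is the set of functions $D\to[0,\infty]$ with pointwise order and pointwise operations, where $\infty+x=x+\infty=\infty$, $0\cdot\infty=0$, $r\cdot\infty=\infty$ for $r>0$; for $x\ge y$ in $[0,\infty]$, $x-y$ is the least $z\in[0,\infty]$ with $x=y+z$ (so $\infty-\infty=0$, $\infty-z=\infty$ for $z<\infty$). $K$ is affine if $K(\alpha\eta_1+(1-\alpha)\eta_2)=\alpha K(\eta_1)+(1-\alpha)K(\eta_2)$ for all $\eta_1,\eta_2$ and $\alpha\in[0,1]$. The linear part of $K$ is $(\mathsf{D}K)(\eta)=K(\eta)-K(\mathbb{O})$ (pointwise), where $\mathbb{O}$ is the constant zero function. *)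

theory Defs
  imports "HOL-Library.Extended_Nonnegative_Real"
begin

definition esub :: "ennreal \<Rightarrow> ennreal \<Rightarrow> ennreal" where
  "esub x y = (LEAST z. x = y + z)"

text \<open>Affine maps E(D) \<rightarrow> E(D'), functions represented as 'd \<Rightarrow> ennreal with pointwise operations.\<close>
definition affine_K :: "(('d \<Rightarrow> ennreal) \<Rightarrow> ('e \<Rightarrow> ennreal)) \<Rightarrow> bool" where
  "affine_K K \<longleftrightarrow> (\<forall>\<eta>1 \<eta>2 (a::real). 0 \<le> a \<and> a \<le> 1 \<longrightarrow>
      K (\<lambda>x. ennreal a * \<eta>1 x + ennreal (1 - a) * \<eta>2 x)
      = (\<lambda>y. ennreal a * K \<eta>1 y + ennreal (1 - a) * K \<eta>2 y))"

definition linpart :: "(('d \<Rightarrow> ennreal) \<Rightarrow> ('e \<Rightarrow> ennreal)) \<Rightarrow> ('d \<Rightarrow> ennreal) \<Rightarrow> ('e \<Rightarrow> ennreal)" where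
  "linpart K \<eta> = (\<lambda>y. esub (K \<eta> y) (K (\<lambda>_. 0) y))"

end

theory Submission
  imports Defs
begin

text \<open>Fix an output point y and write z = K 0 y. Convex combinations with 0 give
  K (a \<eta>) = a K \<eta> + (1 - a) z for a \<in> [0,1], and the midpoint of \<eta>1 and \<eta>2 gives
  K (\<eta>1 + \<eta>2) + z = K \<eta>1 + K \<eta>2. Letting a \<rightarrow> 0 in K \<eta> = a K (\<eta>/a) + (1 - a) z shows z \<le> K \<eta>.
  If z = \<infinity> then K \<eta> = \<infinity> for every \<eta>, so D K vanishes at y (\<infinity> - \<infinity> = 0) and both identities
  are trivial. If z < \<infinity> then K \<eta> = z + D K \<eta> and z can be cancelled from the two
  equations above; scaling by a > 1 is reduced to scaling by 1/a.\<close>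

lemma esub_add_cancel_left:
  assumes "y \<noteq> top"
  shows "esub (y + w) y = w"
  unfolding esub_def
proof (rule Least_equality)
  fix z assume "y + w = y + z"
  then show "w \<le> z" using assms by (simp add: ennreal_add_left_cancel)
qed simp

lemma esub_top_top: "esub top top = 0"
  unfolding esub_def by (rule Least_equality) auto

lemma affine_K_scale:
  assumes "affine_K K" "0 \<le> a" "a \<le> 1"
  shows "K (\<lambda>x. ennreal a * \<eta> x) y = ennreal a * K \<eta> y + ennreal (1 - a) * K (\<lambda>_. 0) y"
  using assms(1)[unfolded affine_K_def, rule_format, of a \<eta> "\<lambda>_. 0"] assms(2,3)
  by (simp add: fun_eq_iff)

lemma affine_K_add:
  assumes "affine_K K"
  shows "K (\<lambda>x. \<eta>1 x + \<eta>2 x) y + K (\<lambda>_. 0) y = K \<eta>1 y + K \<eta>2 y"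
proof -
  let ?h = "ennreal (1/2)"
  have two_half: "ennreal 2 * ?h = 1"
    by (subst ennreal_mult[symmetric]) auto
  have "?h * K \<eta>1 y + ?h * K \<eta>2 y = K (\<lambda>x. ?h * \<eta>1 x + ?h * \<eta>2 x) y"
    using assms[unfolded affine_K_def, rule_format, of "1/2" \<eta>1 \<eta>2]
    by (simp add: fun_eq_iff)
  also have "\<dots> = K (\<lambda>x. ?h * (\<eta>1 x + \<eta>2 x)) y"
    by (simp add: distrib_left)
  also have "\<dots> = ?h * K (\<lambda>x. \<eta>1 x + \<eta>2 x) y + ?h * K (\<lambda>_. 0) y"
    using affine_K_scale[OF assms, of "1/2"] by simp
  finally have "?h * (K \<eta>1 y + K \<eta>2 y) = ?h * (K (\<lambda>x. \<eta>1 x + \<eta>2 x) y + K (\<lambda>_. 0) y)"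
    by (simp add: distrib_left)
  then have "(ennreal 2 * ?h) * (K \<eta>1 y + K \<eta>2 y)
      = (ennreal 2 * ?h) * (K (\<lambda>x. \<eta>1 x + \<eta>2 x) y + K (\<lambda>_. 0) y)"
    by (simp only: mult.assoc)
  then show ?thesis
    by (simp only: two_half mult_1)
qed

lemma affine_K_zero_le:
  assumes "affine_K K"
  shows "K (\<lambda>_. 0) y \<le> K \<eta> y"
proof (rule ennreal_approx_unit)
  fix b :: ennreal assume "0 < b" "b < 1"
  then obtain r where r: "b = ennreal r" "0 < r" "r < 1"
    by (cases b) auto
  define a where "a = 1 - r"
  have a: "0 < a" "a \<le> 1" "1 - a = r"
    using r by (auto simp: a_def)
  have "K \<eta> y = K (\<lambda>x. ennreal a * (ennreal (1/a) * \<eta> x)) y"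
    using a by (simp add: mult.assoc[symmetric] ennreal_mult[symmetric])
  also have "\<dots> = ennreal a * K (\<lambda>x. ennreal (1/a) * \<eta> x) y + b * K (\<lambda>_. 0) y"
    using affine_K_scale[OF assms, of a] a r by simp
  finally show "b * K (\<lambda>_. 0) y \<le> K \<eta> y"
    by (metis add.commute le_iff_add)
qed

lemma affine_K_eq_add_linpart:
  assumes "affine_K K" "K (\<lambda>_. 0) y \<noteq> top"
  shows "K \<eta> y = K (\<lambda>_. 0) y + linpart K \<eta> y"
proof -
  obtain w where w: "K \<eta> y = K (\<lambda>_. 0) y + w"
    using affine_K_zero_le[OF assms(1)] le_iff_add by blast
  then show ?thesis
    unfolding linpart_def using esub_add_cancel_left[OF assms(2)] by simp
qed

lemma linpart_eq_0_if_top: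
  assumes "affine_K K" "K (\<lambda>_. 0) y = top"
  shows "linpart K \<eta> y = 0"
proof -
  have "K \<eta> y = top"
    using affine_K_zero_le[OF assms(1), of y \<eta>] assms(2) by (simp add: top_unique)
  then show ?thesis
    unfolding linpart_def using assms(2) esub_top_top by simp
qed

lemma linpart_add:
  assumes "affine_K K"
  shows "linpart K (\<lambda>x. \<eta>1 x + \<eta>2 x) y = linpart K \<eta>1 y + linpart K \<eta>2 y"
proof (cases "K (\<lambda>_. 0) y = top")
  case True
  then show ?thesis using linpart_eq_0_if_top[OF assms] by simp
next
  case finite: False
  let ?z = "K (\<lambda>_. 0) y"
  note decomp = affine_K_eq_add_linpart[OF assms finite]
  have "?z + (?z + linpart K (\<lambda>x. \<eta>1 x + \<eta>2 x) y) = K (\<lambda>x. \<eta>1 x + \<eta>2 x) y + ?z"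
    using decomp[of "\<lambda>x. \<eta>1 x + \<eta>2 x"] by (simp add: add.commute)
  also have "\<dots> = K \<eta>1 y + K \<eta>2 y"
    by (rule affine_K_add[OF assms])
  also have "\<dots> = ?z + (?z + (linpart K \<eta>1 y + linpart K \<eta>2 y))"
    using decomp[of \<eta>1] decomp[of \<eta>2] by (simp add: ac_simps)
  finally show ?thesis
    using finite by (simp add: ennreal_add_left_cancel)
qed

lemma linpart_scale_le_1:
  assumes "affine_K K" "0 \<le> a" "a \<le> 1"
  shows "linpart K (\<lambda>x. ennreal a * \<eta> x) y = ennreal a * linpart K \<eta> y"
proof (cases "K (\<lambda>_. 0) y = top")
  case True
  then show ?thesis using linpart_eq_0_if_top[OF assms(1)] by simp
next
  case finite: False
  let ?z = "K (\<lambda>_. 0) y"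
  note decomp = affine_K_eq_add_linpart[OF assms(1) finite]
  have "?z + linpart K (\<lambda>x. ennreal a * \<eta> x) y = K (\<lambda>x. ennreal a * \<eta> x) y"
    using decomp[of "\<lambda>x. ennreal a * \<eta> x"] by simp
  also have "\<dots> = ennreal a * (?z + linpart K \<eta> y) + ennreal (1 - a) * ?z"
    using affine_K_scale[OF assms] decomp[of \<eta>] by simp
  also have "\<dots> = (ennreal a + ennreal (1 - a)) * ?z + ennreal a * linpart K \<eta> y"
    by (simp add: algebra_simps)
  also have "ennreal a + ennreal (1 - a) = 1"
    using assms(2,3) by (subst ennreal_plus[symmetric]) auto
  finally show ?thesis
    using finite by (simp add: ennreal_add_left_cancel)
qed

lemma linpart_scale:
  assumes "affine_K K" "0 \<le> a"
  shows "linpart K (\<lambda>x. ennreal a * \<eta> x) y = ennreal a * linpart K \<eta> y"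
proof (cases "a \<le> 1")
  case True
  then show ?thesis using linpart_scale_le_1[OF assms] by simp
next
  case False
  have inverse: "ennreal a * (ennreal (1/a) * u) = u" "ennreal (1/a) * (ennreal a * u) = u" for u
    using False by (simp_all add: mult.assoc[symmetric] ennreal_mult[symmetric])
  have "ennreal (1/a) * linpart K (\<lambda>x. ennreal a * \<eta> x) y
      = linpart K (\<lambda>x. ennreal (1/a) * (ennreal a * \<eta> x)) y"
    using False by (intro linpart_scale_le_1[OF assms(1), symmetric]) auto
  also have "\<dots> = linpart K \<eta> y"
    by (simp only: inverse(2))
  finally show ?thesis
    by (metis inverse(1))
qed

theorem lemma3p2:
  fixes K :: "('d \<Rightarrow> ennreal) \<Rightarrow> ('e \<Rightarrow> ennreal)"
  assumes "affine_K K"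
  shows "(\<forall>\<eta>1 \<eta>2. linpart K (\<lambda>x. \<eta>1 x + \<eta>2 x) = (\<lambda>y. linpart K \<eta>1 y + linpart K \<eta>2 y))
       \<and> (\<forall>\<eta> (a::real). 0 \<le> a \<longrightarrow> linpart K (\<lambda>x. ennreal a * \<eta> x) = (\<lambda>y. ennreal a * linpart K \<eta> y))"
  using linpart_add[OF assms] linpart_scale[OF assms] by auto

end
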